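(* Let $n \geq 2$ and let $s=(s_1,s_2,\ldots,s_n)$ be a sequence of numbers from $\{0,1,2\}$. Then the cardinality of the set \[ \{(x_1,\ldots,x_n)\in \{0,1\}^n \mid x_1+x_2\neq s_1,\ x_2+x_3\neq s_2,\ \ldots,\ x_{n-1}+x_n\neq s_{n-1},\ \textrm{and } x_n+x_1\neq s_n\} \] is at most $\ell(n)$.
   Context: The Fibonacci numbers are defined for all integers by $\varphi(0)=0$, $\varphi(1)=1$ and $\varphi(n)=\varphi(n-1)+\varphi(n-2)$. The Lucas numbers are defined by $\ell(n)=\varphi(n-1)+\varphi(n+1)$ (so $\ell(1)=1,\ell(2)=3,\ell(3)=4,\ell(4)=7,\dots$). *)

theory Defs
  imports Main
begin

fun fibo :: "nat \<Rightarrow> nat" where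
  "fibo 0 = 0"
| "fibo (Suc 0) = 1"
| "fibo (Suc (Suc n)) = fibo (Suc n) + fibo n"

definition lucas :: "nat \<Rightarrow> nat" where
  "lucas n = fibo (n - 1) + fibo (n + 1)"

end

theory Submission
  imports Defs
begin

text \<open>Reading the word x cyclically, the number of admissible words is the trace of a product of
  2\<times>2 transfer matrices, one per constraint: for s = 1 the identity, for s = 0 and s = 2 the
  Fibonacci matrices [[0,1],[1,1]] and [[1,1],[1,0]]. A product of k such matrices (identities
  included) has trace at most max 2 (lucas k), with equality for a pure power of one Fibonacci
  matrix; this follows from a system of linear bounds on the four entries in terms of Fibonacci
  numbers that is preserved by multiplication with each of the three matrices.\<close>

text \<open>walks cs a b enumerates the words [x1, ..., xm] over {0,1} with xm = b and
  x(i-1) + xi \<noteq> ci for all i, where x0 = a; so its length is the (a,b) entry of the product of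
  the transfer matrices of c1, ..., cm.\<close>
fun walks :: "nat list \<Rightarrow> nat \<Rightarrow> nat \<Rightarrow> nat list list" where
  "walks [] a b = (if a = b then [[]] else [])"
| "walks (c # cs) a b =
     map ((#) 0) (if a \<noteq> c then walks cs 0 b else [])
   @ map ((#) 1) (if a + 1 \<noteq> c then walks cs 1 b else [])"

lemma walks_complete:
  assumes "length xs = length cs" and "set xs \<subseteq> {0, 1}"
    and "\<forall>i<length cs. (a # xs) ! i + xs ! i \<noteq> cs ! i" and "last (a # xs) = b"
  shows "xs \<in> set (walks cs a b)"
  using assms
proof (induction cs arbitrary: a xs)
  case Nil
  then show ?case by simp
next
  case (Cons c cs)
  from Cons.prems(1) obtain x ys where xs: "xs = x # ys" by (cases xs) auto
  have "x \<in> {0, 1}" using Cons.prems(2) xs by auto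
  moreover have "a + x \<noteq> c" using Cons.prems(3)[rule_format, of 0] xs by simp
  moreover have "\<forall>i<length cs. (x # ys) ! i + ys ! i \<noteq> cs ! i"
    using Cons.prems(3) xs by (metis Suc_less_eq length_Cons nth_Cons_Suc)
  then have "ys \<in> set (walks cs x b)"
    using Cons.IH[of ys x] Cons.prems xs by auto
  ultimately show ?case using xs by auto
qed

lemma fibo_le_Suc: "fibo n \<le> fibo (Suc n)"
  by (induction n rule: fibo.induct) auto

lemma fibo_mono: "m \<le> n \<Longrightarrow> fibo m \<le> fibo n"
  by (rule lift_Suc_mono_le[of fibo]) (auto simp: fibo_le_Suc)

lemma lucas_le_Suc: "lucas n \<le> lucas (Suc n)"
  unfolding lucas_def using fibo_mono[of "n - 1" n] fibo_le_Suc[of "Suc n"] by simp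

lemma lucas_ge_2: "2 \<le> n \<Longrightarrow> 2 \<le> lucas n"
  using fibo_mono[of 3 "n + 1"] by (simp add: lucas_def numeral_eq_Suc)

text \<open>Bounds on the entries [[a,b],[c,d]] of a product of k transfer matrices.\<close>
definition transfer_bounds :: "nat \<Rightarrow> nat \<Rightarrow> nat \<Rightarrow> nat \<Rightarrow> nat \<Rightarrow> bool" where
  "transfer_bounds k a b c d \<longleftrightarrow>
     a \<le> fibo (k + 1) \<and> b \<le> fibo (k + 1) \<and> c \<le> fibo (k + 1) \<and> d \<le> fibo (k + 1)
   \<and> a + b \<le> fibo (k + 2) \<and> c + d \<le> fibo (k + 2) \<and> a + c \<le> fibo (k + 2) \<and> b + d \<le> fibo (k + 2)
   \<and> a + b + c \<le> lucas (k + 1) \<and> b + c + d \<le> lucas (k + 1)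
   \<and> a + b + c + d \<le> fibo (k + 3)
   \<and> a + d \<le> max 2 (lucas k)"

lemma transfer_bounds_Nil: "transfer_bounds 0 1 0 0 1"
  by (simp add: transfer_bounds_def lucas_def numeral_eq_Suc)

lemma transfer_bounds_cons_0:
  "transfer_bounds k a b c d \<Longrightarrow> transfer_bounds (Suc k) c d (a + c) (b + d)"
  using fibo_le_Suc[of k]
  by (simp add: transfer_bounds_def lucas_def numeral_eq_Suc) linarith

lemma transfer_bounds_cons_1:
  "transfer_bounds k a b c d \<Longrightarrow> transfer_bounds (Suc k) a b c d"
  using fibo_le_Suc[of "k + 1"] fibo_le_Suc[of "k + 2"] fibo_le_Suc[of "k + 3"]
    lucas_le_Suc[of k] lucas_le_Suc[of "k + 1"]
  unfolding transfer_bounds_def by auto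

lemma transfer_bounds_cons_2:
  "transfer_bounds k a b c d \<Longrightarrow> transfer_bounds (Suc k) (a + c) (b + d) a b"
  using fibo_le_Suc[of k]
  by (simp add: transfer_bounds_def lucas_def numeral_eq_Suc) linarith

lemma transfer_bounds_walks:
  assumes "set cs \<subseteq> {0, 1, 2}"
  shows "transfer_bounds (length cs)
           (length (walks cs 0 0)) (length (walks cs 0 1))
           (length (walks cs 1 0)) (length (walks cs 1 1))"
  using assms
proof (induction cs)
  case Nil
  show ?case using transfer_bounds_Nil by simp
next
  case (Cons c cs)
  then have "c = 0 \<or> c = 1 \<or> c = 2" by auto
  then show ?case
    using Cons transfer_bounds_cons_0 transfer_bounds_cons_1 transfer_bounds_cons_2
    by (elim disjE) simp_all
qed

definition cyclic_words :: "nat list \<Rightarrow> nat list set" where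
  "cyclic_words cs = {x. length x = length cs \<and> set x \<subseteq> {0, 1}
     \<and> (\<forall>i<length cs. x ! i + x ! (Suc i mod length cs) \<noteq> cs ! i)}"

text \<open>Rotating the first letter of a cyclic word to its end gives a walk from that letter back
  to itself.\<close>
lemma cyclic_words_subset_walks:
  assumes "cs \<noteq> []"
  shows "cyclic_words cs \<subseteq>
    (\<lambda>xs. 0 # butlast xs) ` set (walks cs 0 0) \<union> (\<lambda>xs. 1 # butlast xs) ` set (walks cs 1 1)"
proof
  fix x assume x: "x \<in> cyclic_words cs"
  define n where "n = length cs"
  have len: "length x = n" and bin: "set x \<subseteq> {0, 1}"
    and adj: "\<forall>i<n. x ! i + x ! (Suc i mod n) \<noteq> cs ! i"
    using x by (auto simp: cyclic_words_def n_def)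
  obtain x0 r where xr: "x = x0 # r" using len assms n_def by (cases x) auto
  have shifted: "(x0 # r @ [x0]) ! i = x ! i" "(r @ [x0]) ! i = x ! (Suc i mod n)" if "i < n" for i
    using that len xr by (auto simp: nth_append nth_Cons' mod_Suc)
  have "r @ [x0] \<in> set (walks cs x0 x0)"
    using len bin adj xr shifted by (intro walks_complete) (auto simp: n_def)
  moreover have "x0 \<in> {0, 1}" using bin xr by auto
  ultimately show "x \<in> (\<lambda>xs. 0 # butlast xs) ` set (walks cs 0 0)
                     \<union> (\<lambda>xs. 1 # butlast xs) ` set (walks cs 1 1)"
    using xr by force
qed

lemma card_cyclic_words_le:
  assumes "cs \<noteq> []" and "set cs \<subseteq> {0, 1, 2}"
  shows "card (cyclic_words cs) \<le> max 2 (lucas (length cs))"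
proof -
  let ?W0 = "(\<lambda>xs. 0 # butlast xs) ` set (walks cs 0 0)"
  let ?W1 = "(\<lambda>xs. 1 # butlast xs) ` set (walks cs 1 1)"
  have "card (cyclic_words cs) \<le> card (?W0 \<union> ?W1)"
    using cyclic_words_subset_walks[OF assms(1)] by (intro card_mono) auto
  also have "\<dots> \<le> card ?W0 + card ?W1"
    by (rule card_Un_le)
  also have "\<dots> \<le> length (walks cs 0 0) + length (walks cs 1 1)"
    using card_image_le card_length le_trans add_mono by (metis finite_set)
  also have "\<dots> \<le> max 2 (lucas (length cs))"
    using transfer_bounds_walks[OF assms(2)] by (simp add: transfer_bounds_def)
  finally show ?thesis .
qed

lemma ball_atLeastLessThan_Suc_shift: "(\<forall>i\<in>{1..<Suc m}. Q i) \<longleftrightarrow> (\<forall>i<m. Q (Suc i))"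
  by (auto simp: Ball_def) (metis Suc_le_D Suc_less_eq)

lemma cyclic_words_map_upt:
  "cyclic_words (map s [1..<Suc m + 1]) = {x. length x = Suc m \<and> set x \<subseteq> {0, 1}
     \<and> (\<forall>i\<in>{1..<Suc m}. x ! (i - 1) + x ! i \<noteq> s i) \<and> x ! m + x ! 0 \<noteq> s (Suc m)}"
  unfolding cyclic_words_def ball_atLeastLessThan_Suc_shift
  by (auto simp: All_less_Suc nth_map_upt simp del: upt_Suc)

theorem lemma3p1:
  fixes n :: nat and s :: "nat \<Rightarrow> nat"
  assumes "n \<ge> 2"
    and "\<forall>i\<in>{1..n}. s i \<in> {0, 1, 2}"
  shows "card {x :: nat list. length x = n \<and> set x \<subseteq> {0, 1}
            \<and> (\<forall>i\<in>{1..<n}. x ! (i - 1) + x ! i \<noteq> s i)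
            \<and> x ! (n - 1) + x ! 0 \<noteq> s n} \<le> lucas n"
proof -
  obtain m where n: "n = Suc m" using assms(1) by (cases n) auto
  define cs where "cs = map s [1..<n + 1]"
  have "cs \<noteq> []" and "set cs \<subseteq> {0, 1, 2}" and "length cs = n"
    using assms(2) n by (auto simp: cs_def atLeastLessThanSuc_atLeastAtMost simp del: upt_Suc)
  then have "card (cyclic_words cs) \<le> lucas n"
    using card_cyclic_words_le lucas_ge_2[OF assms(1)] by fastforce
  then show ?thesis
    using cyclic_words_map_upt[of s m] by (simp add: cs_def n)
qed

end
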